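(* Let $K$ be a field of characteristic $0$, $d\geq 2$ an integer, $m$ an integer with $\gcd(m,d)=1$, $r:=m/d$, and $E\geq 2$ an integer. Let $V_{r,E}(x):=\sum_{k=0}^{E-1}\binom{r}{k}x^k\in K[x]$, where $\binom{r}{k}=\frac{r(r-1)\cdots(r-k+1)}{k!}$. Suppose $m>d(E-1)$. Then the polynomial $F(x)=(1+x)^m-V_{r,E}(x)^d$ has degree $m$, has no nonzero repeated roots (in an algebraic closure of $K$), and has $0$ as a root of multiplicity exactly $E$. Equivalently, $f(x):=F(x)/x^E$ is a polynomial of positive degree $m-E$ without repeated roots and with nonzero constant term. *)

theory Defs
  imports "HOL-Computational_Algebra.Polynomial"
begin

definition is_field_hom :: "('a::field \<Rightarrow> 'b::field) \<Rightarrow> bool" where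
  "is_field_hom \<phi> \<longleftrightarrow> \<phi> 0 = 0 \<and> \<phi> 1 = 1 \<and>
     (\<forall>x y. \<phi> (x + y) = \<phi> x + \<phi> y) \<and> (\<forall>x y. \<phi> (x * y) = \<phi> x * \<phi> y)"

definition V_poly :: "'a::field_char_0 \<Rightarrow> nat \<Rightarrow> 'a poly" where
  "V_poly r E = (\<Sum>k<E. monom (r gchoose k) k)"

end

theory Submission
  imports Defs
begin

(*
  V = V_{r,E} is the truncated binomial series of (1 + x)^r, which solves (1 + x) y' = r y.
  Truncation leaves a single error monomial,
    (1 + x) V' = r V + b x^(E-1)  with  b = (E - 1 - r) (r choose (E - 1)),
  and b is nonzero because r = m/d is not an integer. Since m = d r, the binomial defect
  F = (1 + x)^m - V^d satisfies
    (1 + x) F' = m F - d b x^(E-1) V^(d-1).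
  Comparing coefficients, F(0) = 0 forces the coefficients of x^0, ..., x^(E-1) to vanish, while
  the coefficient of x^E is -d b / E; so order 0 F = E. At a nonzero multiple root z we have
  F(z) = F'(z) = 0, which forces V(z) = 0, hence (1 + z)^m = 0, i.e. z = -1; but at -1 the
  equation for V reads b (-1)^(E-1) = 0. Field embeddings preserve both differential identities,
  so the argument applies over any extension field.
*)

lemma coeff_pCons_1_1_mult_pderiv:
  "coeff ([:1, 1:] * pderiv p) j = of_nat (Suc j) * coeff p (Suc j) + of_nat j * coeff p j"
  by (cases j) (simp_all add: coeff_pderiv coeff_pCons)

lemma poly_pderiv_eq_0_if_order_ge_2:
  fixes p :: "'a::idom poly"
  assumes "order a p \<ge> 2"
  shows "poly (pderiv p) a = 0"
proof -
  have "[:- a, 1:] ^ 2 dvd p"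
    using assms order_divides by blast
  then obtain q where q: "p = [:- a, 1:] ^ 2 * q" ..
  have "poly (pderiv ([:- a, 1:] ^ 2 * q)) a
      = poly ([:- a, 1:] ^ 2) a * poly (pderiv q) a + poly q a * poly (pderiv ([:- a, 1:] ^ 2)) a"
    by (simp only: pderiv_mult poly_add poly_mult)
  also have "\<dots> = 0"
    by (simp add: pderiv_power)
  finally show ?thesis
    unfolding q .
qed

lemma order_pCons_0_1_power_mult:
  fixes p :: "'a::idom poly"
  assumes "z \<noteq> 0"
  shows "order z ([:0, 1:] ^ n * p) = order z p"
proof (cases "p = 0")
  case False
  then show ?thesis
    using assms by (simp add: order_mult order_0I)
qed simp

lemma order_0_div_decomp:
  fixes p :: "'a::field poly"
  assumes "p \<noteq> 0"
  defines "q \<equiv> p div [:0, 1:] ^ order 0 p"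
  shows "p = [:0, 1:] ^ order 0 p * q" and "coeff q 0 \<noteq> 0" and "degree q = degree p - order 0 p"
proof -
  have "[:0, 1:] ^ order 0 p dvd p"
    using order_1[of 0 p] by simp
  then show p_eq: "p = [:0, 1:] ^ order 0 p * q"
    unfolding q_def by simp
  with \<open>p \<noteq> 0\<close> have "q \<noteq> 0"
    by auto
  have "order 0 p = order 0 p + order 0 q"
    using order_mult[of "[:0, 1:] ^ order 0 p" q 0] order_power_n_n[of "0 :: 'a" "order 0 p"] p_eq \<open>p \<noteq> 0\<close>
    by simp
  then show "coeff q 0 \<noteq> 0"
    using \<open>q \<noteq> 0\<close> by (simp add: order_root poly_0_coeff_0 [symmetric])
  have "degree ([:0, 1:] ^ order 0 p * q) = order 0 p + degree q"
    using \<open>q \<noteq> 0\<close> by (simp add: degree_mult_eq degree_linear_power)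
  then show "degree q = degree p - order 0 p"
    using p_eq by (metis diff_add_inverse)
qed

lemma order_0_eq_Suc_if_ode:
  fixes p q :: "'a::field_char_0 poly"
  assumes ode: "[:1, 1:] * pderiv p = smult c p + monom 1 n * q"
    and "poly p 0 = 0" and "poly q 0 \<noteq> 0"
  shows "order 0 p = Suc n"
proof -
  have coeff_ode: "of_nat (Suc j) * coeff p (Suc j) + of_nat j * coeff p j
      = c * coeff p j + (if j < n then 0 else coeff q (j - n))" for j
  proof -
    have "coeff ([:1, 1:] * pderiv p) j = coeff (smult c p + monom 1 n * q) j"
      by (simp only: ode)
    then show ?thesis
      unfolding coeff_pCons_1_1_mult_pderiv coeff_add coeff_smult coeff_monom_mult by simp
  qed
  have low: "coeff p j = 0" if "j \<le> n" for j
    using that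
  proof (induction j)
    case 0
    then show ?case using assms(2) by (simp add: poly_0_coeff_0)
  next
    case (Suc j)
    then show ?case using coeff_ode[of j] by (simp del: of_nat_Suc)
  qed
  have "of_nat (Suc n) * coeff p (Suc n) = coeff q 0"
    using coeff_ode[of n] low[of n] by simp
  then have top: "coeff p (Suc n) \<noteq> 0"
    using assms(3) by (auto simp: poly_0_coeff_0)
  then have "p \<noteq> 0" by auto
  have "monom 1 (Suc n) dvd p"
    using low by (simp add: monom_1_dvd_iff' less_Suc_eq_le)
  moreover have "\<not> monom 1 (Suc (Suc n)) dvd p"
    using top by (auto simp: monom_1_dvd_iff')
  ultimately show ?thesis
    using monom_1_dvd_iff[OF \<open>p \<noteq> 0\<close>] by (meson le_antisym not_less_eq_eq)
qed

lemma pderiv_binomial_defect: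
  fixes V :: "'a::idom poly"
  assumes ode: "[:1, 1:] * pderiv V = smult \<rho> V + monom \<beta> n"
    and dm: "of_nat d * \<rho> = of_nat m" and "d > 0"
  shows "[:1, 1:] * pderiv ([:1, 1:] ^ m - V ^ d)
    = smult (of_nat m) ([:1, 1:] ^ m - V ^ d) + monom 1 n * smult (- (of_nat d * \<beta>)) (V ^ (d - 1))"
proof -
  have pderiv_linear: "pderiv [:1, 1:] = (1 :: 'a poly)"
    by (simp add: pderiv_pCons)
  have binomial: "[:1, 1:] * pderiv ([:1, 1:] ^ m) = smult (of_nat m) ([:1, 1:] ^ m :: 'a poly)"
  proof (cases m)
    case (Suc k)
    then show ?thesis
      by (simp add: pderiv_power_Suc pderiv_linear del: power_Suc) simp
  qed simp
  obtain d' where d': "d = Suc d'"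
    using \<open>d > 0\<close> gr0_implies_Suc by blast
  have "[:1, 1:] * pderiv (V ^ d) = smult (of_nat d) (V ^ d') * ([:1, 1:] * pderiv V)"
    unfolding d' pderiv_power_Suc by (rule mult.left_commute)
  also have "\<dots> = smult (of_nat d) (V ^ d') * (smult \<rho> V + smult \<beta> (monom 1 n))"
    by (simp only: ode smult_monom mult.right_neutral)
  also have "\<dots> = smult (of_nat d * \<rho>) (V ^ d) + monom 1 n * smult (of_nat d * \<beta>) (V ^ d')"
    by (simp add: d' algebra_simps)
  finally have power: "[:1, 1:] * pderiv (V ^ d)
      = smult (of_nat m) (V ^ d) + monom 1 n * smult (of_nat d * \<beta>) (V ^ (d - 1))"
    by (simp only: dm [unfolded d'] d' diff_Suc_1)
  show ?thesis
    unfolding pderiv_diff right_diff_distrib binomial power by (simp add: smult_diff_right)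
qed

lemma degree_binomial_defect:
  fixes V :: "'a::idom poly"
  assumes "d * degree V < m"
  shows "degree ([:1, 1:] ^ m - V ^ d) = m"
proof -
  have "degree (V ^ d) < m"
    using degree_power_le[of V d] assms by (simp add: mult.commute)
  then show ?thesis
    unfolding diff_conv_add_uminus by (subst degree_add_eq_left) (simp_all add: degree_linear_power)
qed

lemma order_0_binomial_defect:
  fixes V :: "'a::field_char_0 poly"
  assumes ode: "[:1, 1:] * pderiv V = smult \<rho> V + monom \<beta> n"
    and "\<beta> \<noteq> 0" and dm: "of_nat d * \<rho> = of_nat m" and "d > 0" and "poly V 0 = 1"
  shows "order 0 ([:1, 1:] ^ m - V ^ d) = Suc n"
  using pderiv_binomial_defect[OF ode dm \<open>d > 0\<close>]
proof (rule order_0_eq_Suc_if_ode)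
  show "poly ([:1, 1:] ^ m - V ^ d) 0 = 0"
    using \<open>poly V 0 = 1\<close> by simp
  show "poly (smult (- (of_nat d * \<beta>)) (V ^ (d - 1))) 0 \<noteq> 0"
    using assms(2,4,5) by simp
qed

lemma order_nonzero_root_binomial_defect:
  fixes V :: "'a::field poly" and d m :: nat
  defines "F \<equiv> [:1, 1:] ^ m - V ^ d"
  assumes ode: "[:1, 1:] * pderiv V = smult \<rho> V + monom \<beta> n"
    and "\<beta> \<noteq> 0" and dm: "of_nat d * \<rho> = of_nat m" and "of_nat d \<noteq> (0 :: 'a)"
    and "F \<noteq> 0" and "z \<noteq> 0" and root: "poly F z = 0"
  shows "order z F = 1"
proof (rule ccontr)
  assume "order z F \<noteq> 1"
  moreover have "order z F \<noteq> 0"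
    using \<open>F \<noteq> 0\<close> root order_root by blast
  ultimately have F'_root: "poly (pderiv F) z = 0"
    by (intro poly_pderiv_eq_0_if_order_ge_2) linarith
  have "d > 0"
    using \<open>of_nat d \<noteq> 0\<close> by (intro gr0I) simp
  from arg_cong[OF pderiv_binomial_defect[OF ode dm this, folded F_def], of "\<lambda>p. poly p z"]
  have "z ^ n * (of_nat d * \<beta> * poly V z ^ (d - 1)) = 0"
    using root F'_root by (auto simp: poly_monom)
  then have V_root: "poly V z = 0"
    using \<open>z \<noteq> 0\<close> \<open>\<beta> \<noteq> 0\<close> \<open>of_nat d \<noteq> 0\<close> by simp
  then have "(1 + z) ^ m = 0"
    using root \<open>d > 0\<close> by (simp add: F_def)
  then have "poly [:1, 1:] z = 0"
    by simp
  then have "poly ([:1, 1:] * pderiv V) z = 0"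
    by (simp only: poly_mult mult_zero_left)
  then have "poly (smult \<rho> V + monom \<beta> n) z = 0"
    unfolding ode .
  with V_root have "\<beta> * z ^ n = 0"
    by (simp add: poly_monom)
  with \<open>z \<noteq> 0\<close> \<open>\<beta> \<noteq> 0\<close> show False
    by simp
qed

context
  fixes \<phi> :: "'a::field \<Rightarrow> 'b::field"
  assumes hom: "is_field_hom \<phi>"
begin

lemma field_hom_0 [simp]: "\<phi> 0 = 0"
  and field_hom_1 [simp]: "\<phi> 1 = 1"
  and field_hom_add [simp]: "\<phi> (x + y) = \<phi> x + \<phi> y"
  and field_hom_mult [simp]: "\<phi> (x * y) = \<phi> x * \<phi> y"
  using hom by (simp_all add: is_field_hom_def)

lemma field_hom_uminus [simp]: "\<phi> (- x) = - \<phi> x"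
  using field_hom_add[of x "- x"] by (simp add: eq_neg_iff_add_eq_0 add.commute)

lemma field_hom_diff [simp]: "\<phi> (x - y) = \<phi> x - \<phi> y"
  using field_hom_add[of x "- y"] by simp

lemma field_hom_of_nat [simp]: "\<phi> (of_nat n) = of_nat n"
  by (induction n) simp_all

lemma field_hom_sum [simp]: "\<phi> (sum g A) = (\<Sum>x\<in>A. \<phi> (g x))"
  by (induction A rule: infinite_finite_induct) simp_all

lemma field_hom_eq_0_iff [simp]: "\<phi> x = 0 \<longleftrightarrow> x = 0"
proof
  assume "\<phi> x = 0"
  then have "\<phi> (x * inverse x) = 0" by simp
  then show "x = 0" by (cases "x = 0") simp_all
qed simp

lemma map_poly_field_hom_add: "map_poly \<phi> (p + q) = map_poly \<phi> p + map_poly \<phi> q"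
  by (rule poly_eqI) (simp add: coeff_map_poly)

lemma map_poly_field_hom_diff: "map_poly \<phi> (p - q) = map_poly \<phi> p - map_poly \<phi> q"
  by (rule poly_eqI) (simp add: coeff_map_poly)

lemma map_poly_field_hom_mult: "map_poly \<phi> (p * q) = map_poly \<phi> p * map_poly \<phi> q"
  by (rule poly_eqI) (simp add: coeff_map_poly coeff_mult)

lemma map_poly_field_hom_power: "map_poly \<phi> (p ^ n) = map_poly \<phi> p ^ n"
  by (induction n) (simp_all add: map_poly_field_hom_mult)

lemma map_poly_field_hom_pderiv: "map_poly \<phi> (pderiv p) = pderiv (map_poly \<phi> p)"
  by (rule poly_eqI) (simp add: coeff_map_poly coeff_pderiv)

lemma map_poly_field_hom_smult: "map_poly \<phi> (smult c p) = smult (\<phi> c) (map_poly \<phi> p)"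
  by (rule map_poly_smult) simp_all

lemma map_poly_field_hom_monom: "map_poly \<phi> (monom c n) = monom (\<phi> c) n"
  by (rule map_poly_monom) simp

lemma map_poly_field_hom_eq_0_iff: "map_poly \<phi> p = 0 \<longleftrightarrow> p = 0"
  by (rule map_poly_eq_0_iff) simp_all

lemma map_poly_field_hom_pCons_1_1: "map_poly \<phi> [:1, 1:] = [:1, 1:]"
  by (simp add: map_poly_pCons)

lemmas map_poly_field_hom_simps =
  map_poly_field_hom_add map_poly_field_hom_diff map_poly_field_hom_mult map_poly_field_hom_power
  map_poly_field_hom_pderiv map_poly_field_hom_smult map_poly_field_hom_monom
  map_poly_field_hom_pCons_1_1

lemma order_nonzero_root_map_binomial_defect:
  fixes V :: "'a poly" and d m :: nat
  defines "F \<equiv> [:1, 1:] ^ m - V ^ d"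
  assumes ode: "[:1, 1:] * pderiv V = smult \<rho> V + monom \<beta> n"
    and "\<beta> \<noteq> 0" and dm: "of_nat d * \<rho> = of_nat m" and "of_nat d \<noteq> (0 :: 'a)"
    and "F \<noteq> 0" and "z \<noteq> 0" and "poly (map_poly \<phi> F) z = 0"
  shows "order z (map_poly \<phi> F) = 1"
proof -
  have F: "map_poly \<phi> F = [:1, 1:] ^ m - map_poly \<phi> V ^ d"
    by (simp add: F_def map_poly_field_hom_simps)
  have "[:1, 1:] * pderiv (map_poly \<phi> V) = smult (\<phi> \<rho>) (map_poly \<phi> V) + monom (\<phi> \<beta>) n"
    using arg_cong[OF ode, of "map_poly \<phi>"]
    by (simp only: map_poly_field_hom_simps)
  moreover have "\<phi> \<beta> \<noteq> 0"
    using \<open>\<beta> \<noteq> 0\<close> by simp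
  moreover have "of_nat d * \<phi> \<rho> = of_nat m"
    using arg_cong[OF dm, of \<phi>] by simp
  moreover have "of_nat d \<noteq> (0 :: 'b)"
    using \<open>of_nat d \<noteq> 0\<close> by (metis field_hom_eq_0_iff field_hom_of_nat)
  moreover have "map_poly \<phi> F \<noteq> 0"
    using \<open>F \<noteq> 0\<close> by (simp add: map_poly_field_hom_eq_0_iff)
  ultimately show ?thesis
    using \<open>z \<noteq> 0\<close> \<open>poly (map_poly \<phi> F) z = 0\<close>
    unfolding F by (rule order_nonzero_root_binomial_defect)
qed

lemma order_root_map_poly_cofactor:
  assumes p_eq: "p = [:0, 1:] ^ k * q" and "coeff q 0 \<noteq> 0" and root: "poly (map_poly \<phi> q) z = 0"
  shows "z \<noteq> 0" and "poly (map_poly \<phi> p) z = 0" and "order z (map_poly \<phi> q) = order z (map_poly \<phi> p)"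
proof -
  have "poly (map_poly \<phi> q) 0 \<noteq> 0"
    using \<open>coeff q 0 \<noteq> 0\<close> by (simp add: poly_0_coeff_0 coeff_map_poly)
  with root show "z \<noteq> 0"
    by auto
  have "map_poly \<phi> p = [:0, 1:] ^ k * map_poly \<phi> q"
    unfolding p_eq by (simp add: map_poly_field_hom_simps map_poly_pCons)
  then show "poly (map_poly \<phi> p) z = 0" and "order z (map_poly \<phi> q) = order z (map_poly \<phi> p)"
    using root \<open>z \<noteq> 0\<close> by (simp_all add: order_pCons_0_1_power_mult)
qed

end

lemma gbinomial_Suc_rec: "of_nat (Suc k) * (a gchoose Suc k) = (a - of_nat k) * (a gchoose k)"
  unfolding gbinomial_absorption gbinomial_absorb_comp ..

lemma gbinomial_neq_0:
  fixes a :: "'a::field_char_0"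
  assumes "a \<notin> \<nat>"
  shows "a gchoose k \<noteq> 0"
  using assms by (auto simp: gbinomial_pochhammer pochhammer_eq_0_iff)

lemma of_nat_div_notin_Nats:
  assumes "coprime m d" and "d \<ge> 2"
  shows "of_nat m / of_nat d \<notin> (\<nat> :: 'a::field_char_0 set)"
proof
  assume "of_nat m / of_nat d \<in> (\<nat> :: 'a set)"
  then obtain j where "of_nat m / of_nat d = (of_nat j :: 'a)"
    by (auto elim: Nats_cases)
  then have "m = j * d"
    using assms(2) by (simp add: divide_eq_eq flip: of_nat_mult)
  then have "d dvd 1"
    using assms(1) coprime_common_divisor by auto
  with assms(2) show False
    by simp
qed

lemma coeff_V_poly: "coeff (V_poly r E) k = (if k < E then r gchoose k else 0)"
  by (simp add: V_poly_def coeff_sum coeff_monom)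

lemma degree_V_poly_le: "degree (V_poly r E) \<le> E - 1"
  by (rule degree_le) (auto simp: coeff_V_poly)

lemma poly_V_poly_0: "E > 0 \<Longrightarrow> poly (V_poly r E) 0 = 1"
  by (simp add: poly_0_coeff_0 coeff_V_poly)

lemma V_poly_ode:
  fixes r :: "'a::field_char_0"
  assumes "E > 0"
  defines "\<beta> \<equiv> (of_nat (E - 1) - r) * (r gchoose (E - 1))"
  shows "[:1, 1:] * pderiv (V_poly r E) = smult r (V_poly r E) + monom \<beta> (E - 1)"
proof (rule poly_eqI)
  fix j
  consider "Suc j < E" | "Suc j = E" | "Suc j > E"
    by linarith
  then have "of_nat (Suc j) * coeff (V_poly r E) (Suc j) + of_nat j * coeff (V_poly r E) j
      = r * coeff (V_poly r E) j + (if E - 1 = j then \<beta> else 0)"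
  proof cases
    case 1
    then show ?thesis
      using gbinomial_Suc_rec[of j r] by (simp add: coeff_V_poly algebra_simps)
  next
    case 2
    then show ?thesis
      by (auto simp: coeff_V_poly \<beta>_def algebra_simps)
  qed (use \<open>E > 0\<close> in \<open>simp add: coeff_V_poly\<close>)
  then show "coeff ([:1, 1:] * pderiv (V_poly r E)) j = coeff (smult r (V_poly r E) + monom \<beta> (E - 1)) j"
    by (simp only: coeff_pCons_1_1_mult_pderiv coeff_add coeff_smult coeff_monom)
qed

theorem theorem7p1:
  fixes d m E :: nat
  assumes "d \<ge> 2" and "coprime m d" and "E \<ge> 2"
    and "m > d * (E - 1)"
  defines "r \<equiv> (of_nat m / of_nat d :: 'a::field_char_0)"
  defines "F \<equiv> [:1, 1:] ^ m - (V_poly r E) ^ d"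
  defines "f \<equiv> F div [:0, 1:] ^ E"
  shows "degree F = m
       \<and> order 0 F = E
       \<and> (\<forall>\<phi> :: 'a \<Rightarrow> 'b::alg_closed_field. is_field_hom \<phi> \<longrightarrow>
            (\<forall>z. z \<noteq> 0 \<and> poly (map_poly \<phi> F) z = 0 \<longrightarrow> order z (map_poly \<phi> F) = 1))
       \<and> degree f = m - E \<and> m - E > 0 \<and> coeff f 0 \<noteq> 0
       \<and> F = [:0, 1:] ^ E * f
       \<and> (\<forall>\<phi> :: 'a \<Rightarrow> 'b::alg_closed_field. is_field_hom \<phi> \<longrightarrow>
            (\<forall>z. poly (map_poly \<phi> f) z = 0 \<longrightarrow> order z (map_poly \<phi> f) = 1))"
proof -
  define \<beta> where "\<beta> = (of_nat (E - 1) - r) * (r gchoose (E - 1))"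
  have "E > 0" and "d > 0" and "of_nat d \<noteq> (0 :: 'a)"
    using assms(1,3) by simp_all
  have "2 * (E - 1) \<le> d * (E - 1)"
    using assms(1) by (rule mult_le_mono1)
  then have "m > E"
    using assms(3,4) by linarith
  have "r \<notin> \<nat>"
    unfolding r_def using assms(2,1) by (rule of_nat_div_notin_Nats)
  then have "\<beta> \<noteq> 0"
    unfolding \<beta>_def by (auto simp: gbinomial_neq_0)
  have dm: "of_nat d * r = of_nat m"
    using \<open>d > 0\<close> by (simp add: r_def)
  have V_ode: "[:1, 1:] * pderiv (V_poly r E) = smult r (V_poly r E) + monom \<beta> (E - 1)"
    unfolding \<beta>_def using \<open>E > 0\<close> by (rule V_poly_ode)
  have "d * degree (V_poly r E) < m"
    using mult_le_mono2[OF degree_V_poly_le] assms(4) by (rule le_less_trans)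
  then have deg_F: "degree F = m"
    unfolding F_def by (rule degree_binomial_defect)
  have ord_F: "order 0 F = E"
    using order_0_binomial_defect[OF V_ode \<open>\<beta> \<noteq> 0\<close> dm \<open>d > 0\<close> poly_V_poly_0[OF \<open>E > 0\<close>]] \<open>E > 0\<close>
    unfolding F_def by simp
  have "F \<noteq> 0"
    using deg_F \<open>m > E\<close> by auto
  note f_props = order_0_div_decomp[OF this, unfolded ord_F deg_F, folded f_def]
  have F_simple: "order z (map_poly \<phi> F) = 1"
    if "is_field_hom \<phi>" "z \<noteq> 0" "poly (map_poly \<phi> F) z = 0" for \<phi> :: "'a \<Rightarrow> 'b::alg_closed_field" and z
    using order_nonzero_root_map_binomial_defect[OF that(1) V_ode \<open>\<beta> \<noteq> 0\<close> dm \<open>of_nat d \<noteq> 0\<close>]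
      that(2,3) \<open>F \<noteq> 0\<close>
    unfolding F_def by blast
  have "order z (map_poly \<phi> f) = 1"
    if "is_field_hom \<phi>" "poly (map_poly \<phi> f) z = 0" for \<phi> :: "'a \<Rightarrow> 'b::alg_closed_field" and z
    using order_root_map_poly_cofactor[OF that(1) f_props(1,2) that(2)] F_simple[OF that(1)] by simp
  then show ?thesis
    using deg_F ord_F F_simple f_props \<open>m > E\<close> by auto
qed

end
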